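(* Let $l\ge2$ and $r\ge3$ be integers and let $\kappa$ be a real number with $3-l(1-\kappa)>0$. Let $n_2,\dots,n_l\ge0$ and $m_2,\dots,m_r\ge0$ be real numbers satisfying $$\sum_{s=2}^l s\,n_s=\sum_{t=2}^r t\,m_t\qquad\text{and}\qquad \sum_{t=2}^{r-1}m_t+\sum_{s=2}^l(l-s)n_s\ \ge\ \kappa l\sum_{s=2}^l n_s .$$ Then $$\sum_{t=2}^{r-1}(r-t)\,m_t\ \ge\ \Bigl(r-\frac{2+r}{3-l(1-\kappa)}\Bigr)\Bigl(\sum_{s=2}^l n_s+\sum_{t=2}^r m_t\Bigr).$$ *)

theory Defs
  imports Complex_Main
begin

end

theory Submission
  imports Defs
begin

(*
  Write N = \<Sum> n_s and S = \<Sum> s n_s for the first family, M' = \<Sum>_{t<r} m_t and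
  S' = \<Sum>_{t<r} t m_t for the second one without its top term m_r, and put
  a = l(1 - \<kappa>), so that the denominator is 3 - a.  In this notation the
  hypotheses say S = S' + r m_r (balanced weights), M' \<ge> S - a N (the second
  hypothesis), and trivially S \<ge> 2N, S' \<ge> 2M'; the claim is equivalent to
        (3 - a) (r N + S) \<le> (2 + r) (N + M' + m_r).
*)

text \<open>For \<open>a \<ge> 1\<close> the claim is the sum of three nonnegative terms:
  \<open>(r - 1 + a)(S - 2N) + (2 + r) m\<^sub>r + (2 + r)(M' - S + aN)\<close>.\<close>
lemma counting_inequality_large_a:
  fixes N M' S' mr a r :: real
  assumes "1 \<le> a" "0 \<le> r" "0 \<le> mr"
    and "2 * N \<le> S' + r * mr" and "S' + r * mr - a * N \<le> M'"
  shows "(3 - a) * (r * N + S' + r * mr) \<le> (2 + r) * (N + M' + mr)"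
proof -
  have "(2 + r) * (N + M' + mr) - (3 - a) * (r * N + S' + r * mr)
      = (r - 1 + a) * (S' + r * mr - 2 * N) + (2 + r) * mr
        + (2 + r) * (M' - (S' + r * mr) + a * N)"
    by (simp add: algebra_simps)
  moreover have "0 \<le> (r - 1 + a) * (S' + r * mr - 2 * N)"
    using assms(1,2,4) by simp
  moreover have "0 \<le> (2 + r) * mr" using assms(2,3) by simp
  moreover have "0 \<le> (2 + r) * (M' - (S' + r * mr) + a * N)"
    using assms(2,5) by simp
  ultimately show ?thesis by linarith
qed

lemma counting_data_vanish_small_a:
  fixes N M' S' mr a r :: real
  assumes "a < 1" "0 < r" "0 \<le> N" "0 \<le> M'" "0 \<le> mr"
    and "2 * N \<le> S' + r * mr" and "2 * M' \<le> S'" and "S' + r * mr - a * N \<le> M'"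
  shows "N = 0" "M' = 0" "S' = 0" "mr = 0"
proof -
  have "0 \<le> r * mr" using assms(2,5) by simp
  have bound: "S' + 2 * (r * mr) \<le> 2 * a * N"
    using assms(7,8) by linarith
  then have "(1 - a) * N \<le> 0"
    using assms(6) \<open>0 \<le> r * mr\<close> by (simp add: algebra_simps)
  then show N0: "N = 0"
    using assms(1,3) by (simp add: mult_le_0_iff)
  have "S' + 2 * (r * mr) \<le> 0" using bound N0 by simp
  then have "r * mr = 0" "S' = 0" using assms(4,7) \<open>0 \<le> r * mr\<close> by linarith+
  then show "mr = 0" "S' = 0" using assms(2) by simp_all
  then show "M' = 0" using assms(4,7) by linarith
qed

lemma counting_inequality:
  fixes N M' S' mr a r :: real
  assumes "0 < r" "0 \<le> N" "0 \<le> M'" "0 \<le> mr"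
    and "2 * N \<le> S' + r * mr" and "2 * M' \<le> S'" and "S' + r * mr - a * N \<le> M'"
  shows "(3 - a) * (r * N + S' + r * mr) \<le> (2 + r) * (N + M' + mr)"
proof (cases "1 \<le> a")
  case True
  then show ?thesis using counting_inequality_large_a assms by simp
next
  case False
  then have "N = 0" "M' = 0" "S' = 0" "mr = 0"
    using counting_data_vanish_small_a assms by (simp_all add: not_le)
  then show ?thesis by simp
qed

lemma divide_out_denominator:
  fixes D X Y r :: real
  assumes "0 < D" and "D * X \<le> (2 + r) * Y"
  shows "(r - (2 + r) / D) * Y \<le> r * Y - X"
proof -
  have "X \<le> (2 + r) * Y / D"
    using assms by (simp add: pos_le_divide_eq mult.commute)
  then show ?thesis by (simp add: algebra_simps)
qed

lemma sum_atLeastAtMost_split_last: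
  fixes f :: "nat \<Rightarrow> 'a::comm_monoid_add"
  assumes "1 \<le> a" and "a \<le> b"
  shows "(\<Sum>t=a..b. f t) = (\<Sum>t=a..b-1. f t) + f b"
proof -
  have "(\<Sum>t=a..Suc (b - 1). f t) = (\<Sum>t=a..b-1. f t) + f (Suc (b - 1))"
    using assms by (subst sum.cl_ivl_Suc) auto
  moreover have "Suc (b - 1) = b" using assms by simp
  ultimately show ?thesis by simp
qed

lemma weighted_sum_lower_bound:
  fixes f :: "nat \<Rightarrow> real"
  assumes "\<forall>t\<in>{a..b}. 0 \<le> f t"
  shows "real a * (\<Sum>t=a..b. f t) \<le> (\<Sum>t=a..b. real t * f t)"
  unfolding sum_distrib_left using assms
  by (intro sum_mono) (auto intro: mult_right_mono)

lemma sum_linear_weight: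
  fixes f :: "nat \<Rightarrow> real"
  shows "(\<Sum>t\<in>A. (c - real t) * f t) = c * (\<Sum>t\<in>A. f t) - (\<Sum>t\<in>A. real t * f t)"
  by (simp add: left_diff_distrib sum_subtractf sum_distrib_left)

theorem mainTheorem7:
  fixes l r :: nat and \<kappa> :: real and n m :: "nat \<Rightarrow> real"
  assumes "l \<ge> 2" and "r \<ge> 3"
    and "3 - real l * (1 - \<kappa>) > 0"
    and "\<forall>s\<in>{2..l}. n s \<ge> 0"
    and "\<forall>t\<in>{2..r}. m t \<ge> 0"
    and "(\<Sum>s=2..l. real s * n s) = (\<Sum>t=2..r. real t * m t)"
    and "(\<Sum>t=2..r-1. m t) + (\<Sum>s=2..l. (real l - real s) * n s)
           \<ge> \<kappa> * real l * (\<Sum>s=2..l. n s)"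
  shows "(\<Sum>t=2..r-1. (real r - real t) * m t)
           \<ge> (real r - (2 + real r) / (3 - real l * (1 - \<kappa>)))
              * ((\<Sum>s=2..l. n s) + (\<Sum>t=2..r. m t))"
proof -
  define N where "N = (\<Sum>s=2..l. n s)"
  define S where "S = (\<Sum>s=2..l. real s * n s)"
  define M' where "M' = (\<Sum>t=2..r-1. m t)"
  define S' where "S' = (\<Sum>t=2..r-1. real t * m t)"
  define a where "a = real l * (1 - \<kappa>)"
  have nonneg_m: "\<forall>t\<in>{2..r-1}. 0 \<le> m t" using assms(5) by auto
  have M_split: "(\<Sum>t=2..r. m t) = M' + m r"
    and S_split: "S = S' + real r * m r"
    using assms(2,6) by (simp_all add: M'_def S'_def S_def sum_atLeastAtMost_split_last)
  have "0 \<le> N" "0 \<le> M'" "0 \<le> m r"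
    using assms(2,4,5) nonneg_m by (auto simp: N_def M'_def intro: sum_nonneg)
  moreover have "2 * N \<le> S" "2 * M' \<le> S'"
    using weighted_sum_lower_bound[OF assms(4)] weighted_sum_lower_bound[OF nonneg_m]
    by (simp_all add: N_def S_def M'_def S'_def)
  moreover have "S - a * N \<le> M'"
    using assms(7) sum_linear_weight[of "real l" n "{2..l}"]
    by (simp add: N_def S_def M'_def a_def algebra_simps)
  ultimately have "(3 - a) * (real r * N + S) \<le> (2 + real r) * (N + (M' + m r))"
    using counting_inequality[of "real r" N M' "m r" S' a] assms(2) S_split
    by (simp add: add.assoc)
  then have "(real r - (2 + real r) / (3 - a)) * (N + (M' + m r))
               \<le> real r * (N + (M' + m r)) - (real r * N + S)"
    using divide_out_denominator assms(3) a_def by blast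
  moreover have "(\<Sum>t=2..r-1. (real r - real t) * m t) = real r * M' - S'"
    by (simp add: sum_linear_weight M'_def S'_def)
  ultimately show ?thesis
    using S_split M_split by (simp add: N_def a_def algebra_simps)
qed

end
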